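(* Let $J$ be a conserved interval of $\mathcal{P}$ and $b$ a positive integer. Then $J$ is $b$-nested if and only if either $J$ contains no $b$-gap, or $J$ contains exactly one $b$-gap and this $b$-gap is good.
   Context: Let $n\geq 2$ and let $\mathcal{P}=\{P_1,\ldots,P_K\}$ be signed permutations of $\{1,\ldots,n\}$: each $P_k$ is an ordering of $1,\ldots,n$ in which each element carries a sign $+$ or $-$. Assume $P_1=(+1,+2,\ldots,+n)$ and that every $P_k$ has first element $+1$ and last element $+n$. For integers $i\leq j$ write $(i..j)=\{i,\ldots,j\}$. A conserved interval of $\mathcal{P}$ is either a singleton, or a set $(a..c)$ with $a<c$ which (ignoring signs) occupies consecutive positions in every $P_k$ and which, in every $P_k$, has either $+a$ at its left end and $+c$ at its right end, or $-c$ at its left end and $-a$ at its right end. Two intervals $(i..j)$ and $(k..l)$ overlap if $i<k\leq j<l$ or $k<i\leq l<j$. A conserved interval is strong if it has at least two elements and overlaps no other conserved interval. A conserved interval $I$ is $b$-nested if $|I|=1$ or $I$ strictly contains a $b$-nested conserved interval $I'$ with $|I'|\geq|I|-b$ (recursive on size). For a conserved interval $I=(a..c)$, a set $\{f_1,\ldots,f_k\}$ with $a=f_1<\cdots<f_k=c$ is a set of frontiers of $I$ if $(f_i..f_j)$ is conserved for all $1\leq i<j\leq k$; $F_I$ denotes the unique inclusion-maximal set of frontiers of $I$. Write $F_J=\{f_1<\cdots<f_k\}$. $J$ contains a $b$-gap at position $l$ ($1\leq l<k$) if $|(f_l..f_{l+1})|>b+1$. Such a $b$-gap is good if there is a strong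 conserved interval $I$ which is $b$-nested, satisfies $f_l<\min I$ and $\max I<f_{l+1}$, and has $|I|\geq f_{l+1}-f_l+1-b$. *)

theory Defs
  imports Main
begin

text \<open>A signed permutation of 1..n is an int list; the sign of an entry is its sign,
  the underlying element is its absolute value.\<close>

definition signed_perm :: "nat \<Rightarrow> int list \<Rightarrow> bool" where
  "signed_perm n p \<longleftrightarrow> length p = n \<and> distinct (map abs p) \<and> set (map abs p) = {1..int n}"

definition conserved_in :: "int list \<Rightarrow> int \<Rightarrow> int \<Rightarrow> bool" where
  "conserved_in p a c \<longleftrightarrow>
     (\<exists>i. i + nat (c - a + 1) \<le> length p
        \<and> abs ` set (take (nat (c - a + 1)) (drop i p)) = {a..c}
        \<and> ((p ! i = a \<and> p ! (i + nat (c - a)) = c)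
           \<or> (p ! i = - c \<and> p ! (i + nat (c - a)) = - a)))"

definition conserved :: "nat \<Rightarrow> int list list \<Rightarrow> int set \<Rightarrow> bool" where
  "conserved n Ps I \<longleftrightarrow>
     (\<exists>a. 1 \<le> a \<and> a \<le> int n \<and> I = {a})
     \<or> (\<exists>a c. a < c \<and> 1 \<le> a \<and> c \<le> int n \<and> I = {a..c} \<and> (\<forall>p\<in>set Ps. conserved_in p a c))"

definition overlap :: "int set \<Rightarrow> int set \<Rightarrow> bool" where
  "overlap I J \<longleftrightarrow>
     (Min I < Min J \<and> Min J \<le> Max I \<and> Max I < Max J)
     \<or> (Min J < Min I \<and> Min I \<le> Max J \<and> Max J < Max I)"

definition strong :: "nat \<Rightarrow> int list list \<Rightarrow> int set \<Rightarrow> bool" where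
  "strong n Ps I \<longleftrightarrow> conserved n Ps I \<and> card I \<ge> 2
     \<and> (\<forall>J. conserved n Ps J \<longrightarrow> \<not> overlap I J)"

inductive bnested :: "nat \<Rightarrow> int list list \<Rightarrow> nat \<Rightarrow> int set \<Rightarrow> bool"
  for n :: nat and Ps :: "int list list" and b :: nat where
  single: "conserved n Ps I \<Longrightarrow> card I = 1 \<Longrightarrow> bnested n Ps b I"
| step: "conserved n Ps I \<Longrightarrow> bnested n Ps b I' \<Longrightarrow> I' \<subset> I \<Longrightarrow> card I \<le> card I' + b
          \<Longrightarrow> bnested n Ps b I"

definition is_frontiers :: "nat \<Rightarrow> int list list \<Rightarrow> int set \<Rightarrow> int set \<Rightarrow> bool" where
  "is_frontiers n Ps I F \<longleftrightarrow> F \<subseteq> I \<and> Min I \<in> F \<and> Max I \<in> F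
     \<and> (\<forall>x\<in>F. \<forall>y\<in>F. x < y \<longrightarrow> conserved n Ps {x..y})"

definition max_frontiers :: "nat \<Rightarrow> int list list \<Rightarrow> int set \<Rightarrow> int set" where
  "max_frontiers n Ps I = (THE F. is_frontiers n Ps I F
      \<and> (\<forall>G. is_frontiers n Ps I G \<and> F \<subseteq> G \<longrightarrow> G = F))"

text \<open>A b-gap at position l is identified with the pair (f_l, f_{l+1}) of consecutive frontiers.\<close>
definition bgaps :: "nat \<Rightarrow> int list list \<Rightarrow> nat \<Rightarrow> int set \<Rightarrow> (int \<times> int) set" where
  "bgaps n Ps b J = (let F = max_frontiers n Ps J in
     {(x, y). x \<in> F \<and> y \<in> F \<and> x < y \<and> (\<forall>z\<in>F. \<not> (x < z \<and> z < y))
              \<and> y - x + 1 > int b + 1})"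

definition good_gap :: "nat \<Rightarrow> int list list \<Rightarrow> nat \<Rightarrow> int \<times> int \<Rightarrow> bool" where
  "good_gap n Ps b g \<longleftrightarrow> (\<exists>I. strong n Ps I \<and> bnested n Ps b I
       \<and> fst g < Min I \<and> Max I < snd g \<and> int (card I) \<ge> snd g - fst g + 1 - int b)"

end

theory Submission
  imports Defs
begin

text \<open>
  Conserved intervals are closed under concatenation, under removing a conserved prefix or
  suffix, and under cutting two overlapping intervals into their outer parts; each of these is
  checked in a single permutation, where a conserved interval is a block of consecutive positions.
  Hence the frontiers of \<open>J = (a..c)\<close> are exactly the \<open>x\<close> with \<open>(a..x)\<close> and \<open>(x..c)\<close>
  conserved, and consecutive frontiers cut \<open>J\<close> into segments.

  If \<open>J\<close> has no b-gap, it is built from \<open>{a}\<close> by appending these segments one at a time. If its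
  only b-gap is good, the strong interval inside makes that gap b-nested, and the remaining
  segments are appended on both sides. Conversely, let \<open>J\<close> be obtained from a b-nested
  \<open>I' = (p..q)\<close> with \<open>(p - a) + (c - q) \<le> b\<close>. Either \<open>p\<close> and \<open>q\<close> are frontiers of \<open>J\<close>, and \<open>J\<close>
  has the same b-gaps as \<open>I'\<close>; or no frontier lies in \<open>I'\<close>, so every b-gap of \<open>J\<close> is the gap
  \<open>(x, y)\<close> around \<open>I'\<close>, and a largest b-nested interval between \<open>x\<close> and \<open>y\<close> containing \<open>I'\<close>
  is strong, which makes that gap good.
\<close>

definition abs_vals :: "int list \<Rightarrow> nat set \<Rightarrow> int set" where
  "abs_vals p S = (\<lambda>k. \<bar>p ! k\<bar>) ` S"

definition conserved_block :: "int list \<Rightarrow> int \<Rightarrow> int \<Rightarrow> nat \<Rightarrow> nat \<Rightarrow> bool" where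
  "conserved_block p a c i j \<longleftrightarrow> i \<le> j \<and> j < length p \<and> abs_vals p {i..j} = {a..c}
     \<and> (p ! i = a \<and> p ! j = c \<or> p ! i = - c \<and> p ! j = - a)"

lemma abs_set_take_drop:
  assumes "i + L \<le> length p"
  shows "abs ` set (take L (drop i p)) = abs_vals p {i..<i + L}"
proof -
  have "set (take L (drop i p)) = nth (drop i p) ` {0..<L}"
    by (rule nth_image[symmetric]) (use assms in simp)
  also have "\<dots> = nth p ` ((\<lambda>k. i + k) ` {0..<L})"
    unfolding image_image using assms by (intro image_cong) auto
  also have "(\<lambda>k. i + k) ` {0..<L} = {i..<i + L}"
    using image_add_atLeastLessThan[of i 0 L] by (simp add: add.commute)
  finally show ?thesis
    by (simp add: abs_vals_def image_image)
qed

lemma abs_vals_Un: "abs_vals p (A \<union> B) = abs_vals p A \<union> abs_vals p B"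
  by (auto simp: abs_vals_def)

lemma abs_vals_singleton: "abs_vals p {k} = {\<bar>p ! k\<bar>}"
  by (simp add: abs_vals_def)

lemma abs_vals_mem: "k \<in> S \<Longrightarrow> \<bar>p ! k\<bar> \<in> abs_vals p S"
  by (simp add: abs_vals_def)

context
  fixes p :: "int list"
  assumes distinct_abs: "distinct (map abs p)"
begin

lemma inj_on_abs_nth: "inj_on (\<lambda>k. \<bar>p ! k\<bar>) {..<length p}"
  using distinct_abs by (auto simp: inj_on_def distinct_conv_nth)

lemma abs_nth_eqD: "k < length p \<Longrightarrow> k' < length p \<Longrightarrow> \<bar>p ! k\<bar> = \<bar>p ! k'\<bar> \<Longrightarrow> k = k'"
  using inj_on_abs_nth by (auto simp: inj_on_def)

lemma abs_vals_Diff: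
  "A \<subseteq> {..<length p} \<Longrightarrow> B \<subseteq> {..<length p} \<Longrightarrow> abs_vals p (A - B) = abs_vals p A - abs_vals p B"
  unfolding abs_vals_def by (rule inj_on_image_set_diff[OF inj_on_abs_nth]) auto

lemma abs_vals_Int:
  "A \<subseteq> {..<length p} \<Longrightarrow> B \<subseteq> {..<length p} \<Longrightarrow> abs_vals p (A \<inter> B) = abs_vals p A \<inter> abs_vals p B"
  unfolding abs_vals_def by (rule inj_on_image_Int[OF inj_on_abs_nth])

lemma abs_vals_Diff_Un_singleton:
  "A \<subseteq> {..<length p} \<Longrightarrow> B \<subseteq> {..<length p}
    \<Longrightarrow> abs_vals p ((A - B) \<union> {k}) = (abs_vals p A - abs_vals p B) \<union> {\<bar>p ! k\<bar>}"
  by (simp only: abs_vals_Un abs_vals_singleton abs_vals_Diff)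

lemma card_abs_vals: "j < length p \<Longrightarrow> card (abs_vals p {i..j}) = card {i..j}"
  unfolding abs_vals_def by (rule card_image, rule inj_on_subset[OF inj_on_abs_nth]) auto

lemma conserved_block_length: "conserved_block p a c i j \<Longrightarrow> j - i = nat (c - a)"
  using card_abs_vals[of j i] by (auto simp: conserved_block_def)

lemma conserved_in_iff_block:
  assumes "a < c"
  shows "conserved_in p a c \<longleftrightarrow> (\<exists>i j. conserved_block p a c i j)"
proof
  assume "conserved_in p a c"
  then obtain i where i: "i + nat (c - a + 1) \<le> length p"
      "abs ` set (take (nat (c - a + 1)) (drop i p)) = {a..c}"
      "p ! i = a \<and> p ! (i + nat (c - a)) = c \<or> p ! i = - c \<and> p ! (i + nat (c - a)) = - a"
    unfolding conserved_in_def by blast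
  have "{i..<i + nat (c - a + 1)} = {i..i + nat (c - a)}"
    using assms by auto
  then have "conserved_block p a c i (i + nat (c - a))"
    using i abs_set_take_drop[OF i(1)] assms by (auto simp: conserved_block_def)
  then show "\<exists>i j. conserved_block p a c i j" by blast
next
  assume "\<exists>i j. conserved_block p a c i j"
  then obtain i j where block: "conserved_block p a c i j" by blast
  have j: "j = i + nat (c - a)" "j < length p"
    using block conserved_block_length[OF block] by (auto simp: conserved_block_def)
  have "{i..<i + nat (c - a + 1)} = {i..j}"
    using j assms by auto
  moreover have "i + nat (c - a + 1) \<le> length p"
    using j assms by linarith
  ultimately show "conserved_in p a c"
    using block j abs_set_take_drop[of i "nat (c - a + 1)"]
    unfolding conserved_in_def conserved_block_def by (intro exI[of _ i]) auto
qed

lemma conserved_block_start: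
  assumes "conserved_block p a c i j" "0 < a" "a < c" "k < length p" "p ! k = a"
  shows "i = k \<and> p ! j = c"
  using assms abs_nth_eqD[of j k] abs_nth_eqD[of i k]
  by (auto simp: conserved_block_def)

lemma conserved_block_end:
  assumes "conserved_block p a c i j" "0 < a" "a < c" "k < length p" "p ! k = c"
  shows "j = k \<and> p ! i = a"
  using assms abs_nth_eqD[of j k] abs_nth_eqD[of i k]
  by (auto simp: conserved_block_def)

end

definition signed_rev :: "int list \<Rightarrow> int list" where
  "signed_rev p = rev (map uminus p)"

lemma length_signed_rev [simp]: "length (signed_rev p) = length p"
  by (simp add: signed_rev_def)

lemma signed_rev_signed_rev [simp]: "signed_rev (signed_rev p) = p"
  by (simp add: signed_rev_def rev_map)

lemma distinct_abs_signed_rev [simp]: "distinct (map abs (signed_rev p)) = distinct (map abs p)"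
  by (simp add: signed_rev_def rev_map[symmetric] o_def)

lemma nth_signed_rev: "k < length p \<Longrightarrow> signed_rev p ! k = - p ! (length p - Suc k)"
  by (simp add: signed_rev_def rev_nth)

lemma abs_vals_signed_rev:
  assumes "i \<le> j" "j < length p"
  shows "abs_vals (signed_rev p) {i..j} = abs_vals p {length p - Suc j..length p - Suc i}"
proof -
  have "abs_vals (signed_rev p) {i..j} = abs_vals p ((\<lambda>k. length p - Suc k) ` {i..j})"
    unfolding abs_vals_def image_image using assms by (intro image_cong) (auto simp: nth_signed_rev)
  also have "(\<lambda>k. length p - Suc k) ` {i..j} = {length p - Suc j..length p - Suc i}"
  proof (intro equalityI subsetI)
    fix x assume "x \<in> {length p - Suc j..length p - Suc i}"
    then show "x \<in> (\<lambda>k. length p - Suc k) ` {i..j}"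
      using assms by (intro image_eqI[of _ _ "length p - Suc x"]) auto
  qed (use assms in auto)
  finally show ?thesis .
qed

lemma conserved_block_signed_rev:
  assumes "conserved_block p a c i j"
  shows "conserved_block (signed_rev p) a c (length p - Suc j) (length p - Suc i)"
proof -
  have ij: "i \<le> j" "j < length p"
    using assms by (auto simp: conserved_block_def)
  then have "abs_vals (signed_rev p) {length p - Suc j..length p - Suc i} = abs_vals p {i..j}"
    by (simp add: abs_vals_signed_rev Suc_diff_Suc)
  then show ?thesis
    using assms ij by (auto simp: conserved_block_def nth_signed_rev Suc_diff_Suc)
qed

lemma conserved_in_signed_rev:
  assumes "distinct (map abs p)" "a < c"
  shows "conserved_in (signed_rev p) a c \<longleftrightarrow> conserved_in p a c"
proof -
  have "conserved_in (signed_rev q) a c" if "distinct (map abs q)" "conserved_in q a c" for q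
    using that assms(2)
    by (meson conserved_block_signed_rev conserved_in_iff_block distinct_abs_signed_rev)
  from this[of p] this[of "signed_rev p"] assms show ?thesis
    by auto
qed

text \<open>
  Reading a permutation backwards with all signs flipped keeps its conserved intervals but turns
  an occurrence \<open>-c \<dots> -a\<close> into \<open>+a \<dots> +c\<close>, so a chosen occurrence may be assumed upright.
\<close>

lemma conserved_in_uprightE:
  assumes "distinct (map abs p)" "0 < a" "a < c" "conserved_in p a c"
  obtains q i j where "distinct (map abs q)"
    "\<And>x y. x < y \<Longrightarrow> conserved_in q x y \<longleftrightarrow> conserved_in p x y"
    "conserved_block q a c i j" "q ! i = a" "q ! j = c"
proof -
  obtain i j where block: "conserved_block p a c i j"
    using assms conserved_in_iff_block by blast
  show ?thesis
  proof (cases "p ! i = a")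
    case True
    then show ?thesis
      using that[of p i j] assms block by (auto simp: conserved_block_def)
  next
    case False
    then have "p ! i = - c" "p ! j = - a" "i \<le> j" "j < length p"
      using block by (auto simp: conserved_block_def)
    then show ?thesis
      using that[of "signed_rev p" "length p - Suc j" "length p - Suc i"] assms
        conserved_block_signed_rev[OF block] conserved_in_signed_rev
      by (auto simp: nth_signed_rev)
  qed
qed

lemma conserved_in_trans:
  assumes "distinct (map abs p)" "0 < a" "a < b" "b < c"
    and "conserved_in p a b" "conserved_in p b c"
  shows "conserved_in p a c"
proof -
  obtain q i j where q: "distinct (map abs q)"
      "\<And>x y. x < y \<Longrightarrow> conserved_in q x y \<longleftrightarrow> conserved_in p x y"
    and ab: "conserved_block q a b i j" "q ! i = a" "q ! j = b"
    using conserved_in_uprightE[OF assms(1,2,3,5)] by blast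
  obtain j' k where bc: "conserved_block q b c j' k"
    using assms q conserved_in_iff_block by blast
  have "j < length q"
    using ab by (simp add: conserved_block_def)
  then have "j' = j" "q ! k = c"
    using conserved_block_start[OF q(1) bc] ab assms by auto
  then have "{i..k} = {i..j} \<union> {j..k}" "{a..c} = {a..b} \<union> {b..c}"
    using ab bc assms by (auto simp: conserved_block_def)
  then have "conserved_block q a c i k"
    using ab bc \<open>j' = j\<close> \<open>q ! k = c\<close> by (auto simp: conserved_block_def abs_vals_Un)
  then show ?thesis
    using q assms conserved_in_iff_block by (meson less_trans)
qed

lemma conserved_in_right_part:
  assumes "distinct (map abs p)" "0 < a" "a < b" "b < c"
    and "conserved_in p a c" "conserved_in p a b"
  shows "conserved_in p b c"
proof -
  have "a < c"
    using assms by simp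
  then obtain q i j where q: "distinct (map abs q)"
      "\<And>x y. x < y \<Longrightarrow> conserved_in q x y \<longleftrightarrow> conserved_in p x y"
    and ac: "conserved_block q a c i j" "q ! i = a" "q ! j = c"
    using conserved_in_uprightE[OF assms(1,2) _ assms(5)] by blast
  obtain i' k where ab: "conserved_block q a b i' k"
    using assms q conserved_in_iff_block by blast
  have "i < length q"
    using ac by (simp add: conserved_block_def)
  then have "i' = i" and qk: "q ! k = b"
    using conserved_block_start[OF q(1) ab] ac assms by auto
  then have "k - i = nat (b - a)" "j - i = nat (c - a)" "i \<le> k" "j < length q"
    using conserved_block_length[OF q(1)] ab ac by (auto simp: conserved_block_def)
  then have pos: "i \<le> k" "k \<le> j" "j < length q"
    using assms by linarith+
  have "abs_vals q {k..j} = abs_vals q (({i..j} - {i..k}) \<union> {k})"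
    using pos by (intro arg_cong[where f = "abs_vals q"]) auto
  also have "\<dots> = (abs_vals q {i..j} - abs_vals q {i..k}) \<union> {b}"
    using pos qk assms(2,3) by (subst abs_vals_Diff_Un_singleton[OF q(1)]) auto
  also have "\<dots> = {b..c}"
    using ab ac \<open>i' = i\<close> assms by (auto simp: conserved_block_def)
  finally have "conserved_block q b c k j"
    using pos ac qk by (simp add: conserved_block_def)
  then show ?thesis
    using q assms conserved_in_iff_block by blast
qed

lemma conserved_in_left_part:
  assumes "distinct (map abs p)" "0 < a" "a < b" "b < c"
    and "conserved_in p a c" "conserved_in p b c"
  shows "conserved_in p a b"
proof -
  have "a < c"
    using assms by simp
  then obtain q i j where q: "distinct (map abs q)"
      "\<And>x y. x < y \<Longrightarrow> conserved_in q x y \<longleftrightarrow> conserved_in p x y"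
    and ac: "conserved_block q a c i j" "q ! i = a" "q ! j = c"
    using conserved_in_uprightE[OF assms(1,2) _ assms(5)] by blast
  obtain k j' where bc: "conserved_block q b c k j'"
    using assms q conserved_in_iff_block by blast
  have "j < length q"
    using ac by (simp add: conserved_block_def)
  then have "j' = j" and qk: "q ! k = b"
    using conserved_block_end[OF q(1) bc] ac assms by auto
  then have "j - k = nat (c - b)" "j - i = nat (c - a)" "k \<le> j" "j < length q"
    using conserved_block_length[OF q(1)] bc ac by (auto simp: conserved_block_def)
  then have pos: "i \<le> k" "k \<le> j" "j < length q"
    using assms by linarith+
  have "abs_vals q {i..k} = abs_vals q (({i..j} - {k..j}) \<union> {k})"
    using pos by (intro arg_cong[where f = "abs_vals q"]) auto
  also have "\<dots> = (abs_vals q {i..j} - abs_vals q {k..j}) \<union> {b}"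
    using pos qk assms(2,3) by (subst abs_vals_Diff_Un_singleton[OF q(1)]) auto
  also have "\<dots> = {a..b}"
    using bc ac \<open>j' = j\<close> assms by (auto simp: conserved_block_def)
  finally have "conserved_block q a b i k"
    using pos ac qk by (simp add: conserved_block_def)
  then show ?thesis
    using q assms conserved_in_iff_block by blast
qed

lemma overlapping_blocks_positions:
  assumes "distinct (map abs q)" "0 < a" "a < b" "b < c" "c < d"
    and "conserved_block q a c i j" "q ! i = a" "q ! j = c" "conserved_block q b d k l"
  shows "i < k \<and> k \<le> j \<and> j \<le> l \<and> q ! k = b \<and> q ! l = d"
proof -
  have ij: "i \<le> j" "j < length q" "abs_vals q {i..j} = {a..c}"
    using assms(6) by (auto simp: conserved_block_def)
  have kl: "k \<le> l" "l < length q" "abs_vals q {k..l} = {b..d}"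
    using assms(9) by (auto simp: conserved_block_def)
  obtain m where "m \<in> {k..l}" "\<bar>q ! m\<bar> = c"
    using kl assms(4,5) unfolding abs_vals_def by (metis atLeastAtMost_iff imageE less_imp_le)
  then have "k \<le> j" "j \<le> l"
    using abs_nth_eqD[OF assms(1), of m j] ij kl assms(2-4,8) by auto
  moreover have "i \<notin> {k..l}"
    using abs_vals_mem[of i "{k..l}" q] kl assms(2,3,7) by auto
  ultimately have "i < k"
    using ij by auto
  moreover have "\<bar>q ! k\<bar> \<in> {a..c}"
    using abs_vals_mem[of k "{i..j}" q] ij \<open>i < k\<close> \<open>k \<le> j\<close> by auto
  then have "q ! k = b" "q ! l = d"
    using assms(2-5,9) by (auto simp: conserved_block_def)
  ultimately show ?thesis
    using \<open>k \<le> j\<close> \<open>j \<le> l\<close> by simp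
qed

lemma conserved_in_overlap:
  assumes "distinct (map abs p)" "0 < a" "a < b" "b < c" "c < d"
    and "conserved_in p a c" "conserved_in p b d"
  shows "conserved_in p a b \<and> conserved_in p c d"
proof -
  have "a < c" "b < d"
    using assms by simp_all
  then obtain q i j where q: "distinct (map abs q)"
      "\<And>x y. x < y \<Longrightarrow> conserved_in q x y \<longleftrightarrow> conserved_in p x y"
    and ac: "conserved_block q a c i j" "q ! i = a" "q ! j = c"
    using conserved_in_uprightE[OF assms(1,2) _ assms(6)] by blast
  obtain k l where bd: "conserved_block q b d k l"
    using assms q \<open>b < d\<close> conserved_in_iff_block by blast
  have pos: "i < k" "k \<le> j" "j \<le> l" "l < length q" and qk: "q ! k = b" "q ! l = d"
    using overlapping_blocks_positions[OF q(1) assms(2-5) ac bd] bd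
    by (auto simp: conserved_block_def)
  have ij: "abs_vals q {i..j} = {a..c}" and kl: "abs_vals q {k..l} = {b..d}"
    using ac bd by (auto simp: conserved_block_def)
  have "abs_vals q {k..j} = abs_vals q ({i..j} \<inter> {k..l})"
    using pos by (intro arg_cong[where f = "abs_vals q"]) auto
  also have "\<dots> = {b..c}"
    using ij kl pos assms by (subst abs_vals_Int[OF q(1)]) auto
  finally have mid: "abs_vals q {k..j} = {b..c}" .
  have "abs_vals q {i..k} = abs_vals q (({i..j} - {k..j}) \<union> {k})"
    using pos by (intro arg_cong[where f = "abs_vals q"]) auto
  also have "\<dots> = {a..b}"
    using ij pos mid qk assms by (subst abs_vals_Diff_Un_singleton[OF q(1)]) auto
  finally have ab: "conserved_block q a b i k"
    using pos ac qk by (simp add: conserved_block_def)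
  have "abs_vals q {j..l} = abs_vals q (({k..l} - {k..j}) \<union> {j})"
    using pos by (intro arg_cong[where f = "abs_vals q"]) auto
  also have "\<dots> = {c..d}"
    using kl pos mid ac assms by (subst abs_vals_Diff_Un_singleton[OF q(1)]) auto
  finally have "conserved_block q c d j l"
    using pos ac qk by (simp add: conserved_block_def)
  with ab show ?thesis
    using q assms conserved_in_iff_block by blast
qed

lemma Min_Max_atLeastAtMost_int: "(a::int) \<le> c \<Longrightarrow> Min {a..c} = a \<and> Max {a..c} = c"
  by (simp add: Max_eq_iff Min_eq_iff)

definition consecutive :: "int set \<Rightarrow> int \<Rightarrow> int \<Rightarrow> bool" where
  "consecutive F x y \<longleftrightarrow> x \<in> F \<and> y \<in> F \<and> x < y \<and> (\<forall>z\<in>F. \<not> (x < z \<and> z < y))"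

lemma consecutive_Int_atLeastAtMost_iff:
  "consecutive (F \<inter> {p..q}) x y \<longleftrightarrow> consecutive F x y \<and> p \<le> x \<and> y \<le> q"
  unfolding consecutive_def by auto

lemma consecutive_unique:
  assumes "consecutive F x y" "consecutive F x' y'" "x < y'" "x' < y"
  shows "x = x' \<and> y = y'"
  using assms unfolding consecutive_def by (meson linorder_neqE)

lemma finite_max_belowE:
  fixes F :: "'a::linorder set"
  assumes "finite F" "z \<in> F" "z < t"
  obtains x where "x \<in> F" "x < t" "\<And>z. z \<in> F \<Longrightarrow> z < t \<Longrightarrow> z \<le> x"
proof -
  have "finite {z \<in> F. z < t}" "{z \<in> F. z < t} \<noteq> {}"
    using assms by auto
  then show ?thesis
    using that[of "Max {z \<in> F. z < t}"] Max_in Max_ge by blast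
qed

lemma finite_min_aboveE:
  fixes F :: "'a::linorder set"
  assumes "finite F" "z \<in> F" "t < z"
  obtains y where "y \<in> F" "t < y" "\<And>z. z \<in> F \<Longrightarrow> t < z \<Longrightarrow> y \<le> z"
proof -
  have "finite {z \<in> F. t < z}" "{z \<in> F. t < z} \<noteq> {}"
    using assms by auto
  then show ?thesis
    using that[of "Min {z \<in> F. t < z}"] Min_in Min_le by blast
qed

lemma conservedE:
  assumes "conserved n Ps I"
  obtains x y where "x \<le> y" "I = {x..y}"
  using assms unfolding conserved_def by (metis atLeastAtMost_singleton order.order_iff_strict)

locale signed_perm_family =
  fixes n :: nat and Ps :: "int list list"
  assumes distinct_abs: "p \<in> set Ps \<Longrightarrow> distinct (map abs p)"
begin

abbreviation conserved_ivl :: "int \<Rightarrow> int \<Rightarrow> bool" where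
  "conserved_ivl x y \<equiv> conserved n Ps {x..y}"

lemma conserved_ivl_iff:
  "x < y \<Longrightarrow> conserved_ivl x y \<longleftrightarrow> 1 \<le> x \<and> y \<le> int n \<and> (\<forall>p\<in>set Ps. conserved_in p x y)"
  unfolding conserved_def by (auto simp: atLeastAtMost_singleton_iff)

lemma conserved_singleton_iff: "conserved n Ps {x} \<longleftrightarrow> 1 \<le> x \<and> x \<le> int n"
  unfolding conserved_def by auto

lemma conserved_ivl_bounds: "x \<le> y \<Longrightarrow> conserved_ivl x y \<Longrightarrow> 1 \<le> x \<and> y \<le> int n"
  using conserved_ivl_iff[of x y] conserved_singleton_iff[of x] by (cases "x = y") auto

lemma conserved_ivl_trans:
  assumes "x \<le> y" "y \<le> z" "conserved_ivl x y" "conserved_ivl y z"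
  shows "conserved_ivl x z"
proof (cases "x = y \<or> y = z")
  case False
  then have "x < y" "y < z"
    using assms by auto
  moreover have "1 \<le> x" "z \<le> int n"
    using assms conserved_ivl_bounds[of x y] conserved_ivl_bounds[of y z] by auto
  ultimately show ?thesis
    using assms conserved_in_trans[OF distinct_abs, of _ x y z] by (simp add: conserved_ivl_iff)
qed (use assms in auto)

lemma conserved_ivl_right_part:
  assumes "x \<le> y" "y \<le> z" "conserved_ivl x z" "conserved_ivl x y"
  shows "conserved_ivl y z"
proof (cases "x = y \<or> y = z")
  case True
  then show ?thesis
    using assms conserved_ivl_bounds[of x z] by (auto simp: conserved_singleton_iff)
next
  case False
  then have "x < y" "y < z"
    using assms by auto
  moreover have "1 \<le> x" "z \<le> int n"
    using assms conserved_ivl_bounds[of x z] by auto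
  ultimately show ?thesis
    using assms conserved_in_right_part[OF distinct_abs, of _ x y z] by (simp add: conserved_ivl_iff)
qed

lemma conserved_ivl_left_part:
  assumes "x \<le> y" "y \<le> z" "conserved_ivl x z" "conserved_ivl y z"
  shows "conserved_ivl x y"
proof (cases "x = y \<or> y = z")
  case True
  then show ?thesis
    using assms conserved_ivl_bounds[of x z] by (auto simp: conserved_singleton_iff)
next
  case False
  then have "x < y" "y < z"
    using assms by auto
  moreover have "1 \<le> x" "z \<le> int n"
    using assms conserved_ivl_bounds[of x z] by auto
  ultimately show ?thesis
    using assms conserved_in_left_part[OF distinct_abs, of _ x y z] by (simp add: conserved_ivl_iff)
qed

lemma conserved_ivl_overlap:
  assumes "a < b" "b < c" "c < d" "conserved_ivl a c" "conserved_ivl b d"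
  shows "conserved_ivl a b \<and> conserved_ivl c d"
proof -
  have "1 \<le> a" "d \<le> int n"
    using assms conserved_ivl_bounds[of a c] conserved_ivl_bounds[of b d] by auto
  then show ?thesis
    using assms conserved_in_overlap[OF distinct_abs, of _ a b c d] by (simp add: conserved_ivl_iff)
qed

lemma conserved_ivl_Un_overlap:
  assumes "p < r" "r \<le> q" "q < s" "conserved_ivl p q" "conserved_ivl r s"
  shows "conserved_ivl p s"
proof -
  have "conserved_ivl q s"
    using assms conserved_ivl_overlap[of p r q s] by (cases "r = q") auto
  then show ?thesis
    using assms conserved_ivl_trans[of p q s] by auto
qed

definition frontiers :: "int \<Rightarrow> int \<Rightarrow> int set" where
  "frontiers a c = {x. a \<le> x \<and> x \<le> c \<and> conserved_ivl a x \<and> conserved_ivl x c}"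

lemma finite_frontiers: "finite (frontiers a c)"
  by (rule finite_subset[of _ "{a..c}"]) (auto simp: frontiers_def)

lemma frontiers_ends: "a \<le> c \<Longrightarrow> conserved_ivl a c \<Longrightarrow> a \<in> frontiers a c \<and> c \<in> frontiers a c"
  using conserved_ivl_bounds[of a c] by (auto simp: frontiers_def conserved_singleton_iff)

lemma conserved_ivl_frontiers:
  "x \<in> frontiers a c \<Longrightarrow> y \<in> frontiers a c \<Longrightarrow> x \<le> y \<Longrightarrow> conserved_ivl x y"
  using conserved_ivl_right_part[of a x y] by (auto simp: frontiers_def)

lemma frontiers_restrict:
  assumes "p \<in> frontiers a c" "q \<in> frontiers a c" "p \<le> q"
  shows "frontiers p q = frontiers a c \<inter> {p..q}"
proof (intro set_eqI iffI)
  fix x assume "x \<in> frontiers p q"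
  then show "x \<in> frontiers a c \<inter> {p..q}"
    using assms conserved_ivl_trans[of a p x] conserved_ivl_trans[of x q c]
    by (auto simp: frontiers_def)
next
  fix x assume "x \<in> frontiers a c \<inter> {p..q}"
  then show "x \<in> frontiers p q"
    using assms conserved_ivl_right_part[of a p x] conserved_ivl_left_part[of x q c]
    by (auto simp: frontiers_def)
qed

lemma frontier_iff_frontier:
  assumes "a \<le> p" "p \<le> q" "q \<le> c" "conserved_ivl p q"
  shows "p \<in> frontiers a c \<longleftrightarrow> q \<in> frontiers a c"
  using assms conserved_ivl_trans[of a p q] conserved_ivl_right_part[of p q c]
    conserved_ivl_left_part[of a p q] conserved_ivl_trans[of p q c]
  by (auto simp: frontiers_def)

lemma max_frontiers_eq:
  assumes "a \<le> c" "conserved_ivl a c"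
  shows "max_frontiers n Ps {a..c} = frontiers a c"
proof -
  have iff: "is_frontiers n Ps {a..c} G \<longleftrightarrow>
      G \<subseteq> {a..c} \<and> a \<in> G \<and> c \<in> G \<and> (\<forall>x\<in>G. \<forall>y\<in>G. x < y \<longrightarrow> conserved_ivl x y)" for G
    using Min_Max_atLeastAtMost_int[OF assms(1)] by (simp add: is_frontiers_def)
  have "frontiers a c \<subseteq> {a..c}"
    by (auto simp: frontiers_def)
  then have "is_frontiers n Ps {a..c} (frontiers a c)"
    using frontiers_ends[OF assms] conserved_ivl_frontiers less_imp_le unfolding iff by blast
  moreover have "G \<subseteq> frontiers a c" if "is_frontiers n Ps {a..c} G" for G
  proof
    fix x assume "x \<in> G"
    then have x: "a \<le> x" "x \<le> c" and
        conserved: "a < x \<Longrightarrow> conserved_ivl a x" "x < c \<Longrightarrow> conserved_ivl x c"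
      using that unfolding iff by auto
    have "conserved_ivl a a" "conserved_ivl c c"
      using frontiers_ends[OF assms] conserved_ivl_frontiers by blast+
    then show "x \<in> frontiers a c"
      using x conserved by (cases "x = a"; cases "x = c") (auto simp: frontiers_def)
  qed
  ultimately show ?thesis
    unfolding max_frontiers_def by (intro the_equality) blast+
qed

lemma bgaps_eq:
  "a \<le> c \<Longrightarrow> conserved_ivl a c \<Longrightarrow>
    bgaps n Ps b {a..c} = {(x, y). consecutive (frontiers a c) x y \<and> int b < y - x}"
  unfolding bgaps_def max_frontiers_eq consecutive_def Let_def by auto

lemma bnested_conserved: "bnested n Ps b I \<Longrightarrow> conserved n Ps I"
  by (induction rule: bnested.induct) auto

lemma bnested_extend_right:
  assumes "a \<le> c" "conserved_ivl a c"
    and "u \<in> frontiers a c" "v \<in> frontiers a c" "u \<le> v" "bnested n Ps b {u..v}"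
    and "\<And>x y. consecutive (frontiers a c) x y \<Longrightarrow> v \<le> x \<Longrightarrow> y - x \<le> int b"
  shows "bnested n Ps b {u..c}"
  using assms(4-7)
proof (induction "nat (c - v)" arbitrary: v rule: less_induct)
  case less
  have "v \<le> c"
    using less.prems by (simp add: frontiers_def)
  show ?case
  proof (cases "v = c")
    case False
    obtain w where w: "w \<in> frontiers a c" "v < w" "\<And>z. z \<in> frontiers a c \<Longrightarrow> v < z \<Longrightarrow> w \<le> z"
      using finite_min_aboveE[OF finite_frontiers, of c a c v] frontiers_ends[OF assms(1,2)]
        \<open>v \<le> c\<close> False by auto
    have "consecutive (frontiers a c) v w"
      using w less.prems unfolding consecutive_def by force
    then have "w - v \<le> int b"
      using less.prems by simp
    moreover have "conserved_ivl u w"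
      using w less.prems assms(3) by (intro conserved_ivl_frontiers) auto
    ultimately have "bnested n Ps b {u..w}"
      using less.prems w by (intro bnested.step[where I = "{u..w}" and I' = "{u..v}"]) auto
    moreover have "nat (c - w) < nat (c - v)"
      using w by (auto simp: frontiers_def)
    ultimately show ?thesis
      using less.hyps w less.prems by auto
  qed (use less.prems in simp)
qed

lemma bnested_extend_left:
  assumes "a \<le> c" "conserved_ivl a c"
    and "u \<in> frontiers a c" "v \<in> frontiers a c" "u \<le> v" "bnested n Ps b {u..v}"
    and "\<And>x y. consecutive (frontiers a c) x y \<Longrightarrow> y \<le> u \<Longrightarrow> y - x \<le> int b"
  shows "bnested n Ps b {a..v}"
  using assms(3,5-7)
proof (induction "nat (u - a)" arbitrary: u rule: less_induct)
  case less
  have "a \<le> u"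
    using less.prems by (simp add: frontiers_def)
  show ?case
  proof (cases "u = a")
    case False
    obtain w where w: "w \<in> frontiers a c" "w < u" "\<And>z. z \<in> frontiers a c \<Longrightarrow> z < u \<Longrightarrow> z \<le> w"
      using finite_max_belowE[OF finite_frontiers, of a a c u] frontiers_ends[OF assms(1,2)]
        \<open>a \<le> u\<close> False by auto
    have "consecutive (frontiers a c) w u"
      using w less.prems unfolding consecutive_def by force
    then have "u - w \<le> int b"
      using less.prems by simp
    moreover have "conserved_ivl w v"
      using w less.prems assms(4) by (intro conserved_ivl_frontiers) auto
    ultimately have "bnested n Ps b {w..v}"
      using less.prems w by (intro bnested.step[where I = "{w..v}" and I' = "{u..v}"]) auto
    moreover have "nat (w - a) < nat (u - a)"
      using w by (auto simp: frontiers_def)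
    ultimately show ?thesis
      using less.hyps w less.prems by auto
  qed (use less.prems in simp)
qed

lemma bnested_good_gap:
  assumes "consecutive (frontiers a c) x y" "good_gap n Ps b (x, y)"
  shows "bnested n Ps b {x..y}"
proof -
  obtain I where I: "strong n Ps I" "bnested n Ps b I" "x < Min I" "Max I < y"
      "int (card I) \<ge> y - x + 1 - int b"
    using assms(2) unfolding good_gap_def by auto
  obtain p q where "p \<le> q" "I = {p..q}"
    using I(1) unfolding strong_def by (blast elim: conservedE)
  with I have "I \<subset> {x..y}" "card {x..y} \<le> card I + b"
    by (auto simp: Min_Max_atLeastAtMost_int)
  moreover have "x \<in> frontiers a c" "y \<in> frontiers a c" "x < y"
    using assms(1) by (auto simp: consecutive_def)
  ultimately show ?thesis
    using conserved_ivl_frontiers[of x a c y] bnested.step[OF _ I(2)] by auto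
qed

lemma bnested_if_gaps:
  assumes "a \<le> c" "conserved_ivl a c"
    and "bgaps n Ps b {a..c} = {} \<or> (\<exists>g. bgaps n Ps b {a..c} = {g} \<and> good_gap n Ps b g)"
  shows "bnested n Ps b {a..c}"
  using assms(3)
proof
  assume "bgaps n Ps b {a..c} = {}"
  then have "\<And>x y. consecutive (frontiers a c) x y \<Longrightarrow> y - x \<le> int b"
    using bgaps_eq[OF assms(1,2)] by fastforce
  moreover have "bnested n Ps b {a..a}"
    using assms(1) conserved_ivl_bounds[OF assms(1,2)]
    by (auto intro: bnested.single simp: conserved_singleton_iff)
  ultimately show ?thesis
    using bnested_extend_right[OF assms(1,2)] frontiers_ends[OF assms(1,2)] by blast
next
  assume "\<exists>g. bgaps n Ps b {a..c} = {g} \<and> good_gap n Ps b g"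
  then obtain x y where gap: "bgaps n Ps b {a..c} = {(x, y)}" "good_gap n Ps b (x, y)"
    by auto
  have "(x, y) \<in> bgaps n Ps b {a..c}"
    using gap(1) by simp
  then have xy: "consecutive (frontiers a c) x y"
    using bgaps_eq[OF assms(1,2)] by simp
  have others: "y' - x' \<le> int b"
    if "consecutive (frontiers a c) x' y'" "(x', y') \<noteq> (x, y)" for x' y'
  proof (rule ccontr)
    assume "\<not> y' - x' \<le> int b"
    then have "(x', y') \<in> bgaps n Ps b {a..c}"
      using that bgaps_eq[OF assms(1,2)] by simp
    then show False
      using gap(1) that(2) by simp
  qed
  have "x \<in> frontiers a c"
    using xy by (simp add: consecutive_def)
  have "bnested n Ps b {x..y}"
    using xy gap(2) by (rule bnested_good_gap)
  then have "bnested n Ps b {x..c}"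
    using xy others by (intro bnested_extend_right[OF assms(1,2)]) (auto simp: consecutive_def)
  moreover have "x \<le> c"
    using \<open>x \<in> frontiers a c\<close> by (simp add: frontiers_def)
  ultimately show ?thesis
    using xy others frontiers_ends[OF assms(1,2)]
    by (intro bnested_extend_left[OF assms(1,2), of x c]) (auto simp: consecutive_def)
qed

lemma bgaps_eq_of_frontiers:
  assumes "a \<le> c" "conserved_ivl a c" "p \<in> frontiers a c" "q \<in> frontiers a c" "p \<le> q"
    and "(p - a) + (c - q) \<le> int b"
  shows "bgaps n Ps b {a..c} = bgaps n Ps b {p..q}"
proof -
  have inside: "p \<le> x \<and> y \<le> q"
    if "consecutive (frontiers a c) x y" "int b < y - x" for x y
  proof -
    have "a \<le> x" "y \<le> c" "a \<le> p" "q \<le> c"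
      using that(1) assms(3,4) by (auto simp: consecutive_def frontiers_def)
    moreover have "y \<le> p" if "x < p"
      using that \<open>consecutive (frontiers a c) x y\<close> assms(3) by (auto simp: consecutive_def)
    moreover have "q \<le> x" if "q < y"
      using that \<open>consecutive (frontiers a c) x y\<close> assms(4) by (auto simp: consecutive_def)
    ultimately show ?thesis
      using that(2) assms(6) by linarith
  qed
  have pq: "conserved_ivl p q"
    using assms(3-5) by (rule conserved_ivl_frontiers)
  show ?thesis
    using inside
    unfolding bgaps_eq[OF assms(1,2)] bgaps_eq[OF assms(5) pq] frontiers_restrict[OF assms(3-5)]
      consecutive_Int_atLeastAtMost_iff by auto
qed

lemma frontier_gap_around_core:
  assumes "a \<le> p" "p \<le> q" "q \<le> c" "conserved_ivl a c" "conserved_ivl p q"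
    and "p \<notin> frontiers a c"
  obtains x y where "consecutive (frontiers a c) x y" "x < p" "q < y"
proof -
  have ends: "a \<in> frontiers a c" "c \<in> frontiers a c"
    using assms frontiers_ends[of a c] by auto
  have q: "q \<notin> frontiers a c"
    using assms frontier_iff_frontier by blast
  have outside: "f < p \<or> q < f" if "f \<in> frontiers a c" for f
  proof (rule ccontr)
    assume "\<not> (f < p \<or> q < f)"
    moreover have "f \<noteq> p" "f \<noteq> q" "a \<noteq> p"
      using that ends(1) assms(6) q by auto
    ultimately have "a < p" "p < f" "f < q"
      using assms(1) by auto
    then have "conserved_ivl a p"
      using that assms(5) conserved_ivl_overlap[of a p f q] by (auto simp: frontiers_def)
    then have "p \<in> frontiers a c"
      using assms conserved_ivl_right_part[of a p c] by (auto simp: frontiers_def)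
    with assms(6) show False ..
  qed
  obtain x where x: "x \<in> frontiers a c" "x < p" "\<And>z. z \<in> frontiers a c \<Longrightarrow> z < p \<Longrightarrow> z \<le> x"
    using finite_max_belowE[OF finite_frontiers ends(1), of p] outside[OF ends(1)] assms(1,2) by auto
  obtain y where y: "y \<in> frontiers a c" "q < y" "\<And>z. z \<in> frontiers a c \<Longrightarrow> q < z \<Longrightarrow> y \<le> z"
    using finite_min_aboveE[OF finite_frontiers ends(2), of q] outside[OF ends(2)] assms(2,3) by auto
  have "consecutive (frontiers a c) x y"
    unfolding consecutive_def using x y outside assms(2) by force
  with x y show ?thesis
    using that by blast
qed

lemma bgaps_subset_gap_around_core:
  assumes "a \<le> c" "conserved_ivl a c" "consecutive (frontiers a c) x y"
    and "x < p" "p \<le> q" "q < y" "(p - a) + (c - q) \<le> int b"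
  shows "bgaps n Ps b {a..c} \<subseteq> {(x, y)}"
proof
  fix g assume "g \<in> bgaps n Ps b {a..c}"
  then obtain x' y' where g: "g = (x', y')" "consecutive (frontiers a c) x' y'" "int b < y' - x'"
    using bgaps_eq[OF assms(1,2)] by auto
  have core: "\<not> (p \<le> z \<and> z \<le> q)" if "z \<in> frontiers a c" for z
    using assms(3-6) that unfolding consecutive_def by force
  have x': "x' \<in> frontiers a c" "a \<le> x'" and y': "y' \<in> frontiers a c" "y' \<le> c"
    using g(2) by (auto simp: consecutive_def frontiers_def)
  have "a \<le> x" "y \<le> c"
    using assms(3) by (auto simp: consecutive_def frontiers_def)
  have "x' < p"
  proof (rule ccontr)
    assume "\<not> x' < p"
    then have "q < x'"
      using core[OF x'(1)] by auto
    then show False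
      using g(3) y'(2) assms(4,5,7) \<open>a \<le> x\<close> by linarith
  qed
  moreover have "q < y'"
  proof (rule ccontr)
    assume "\<not> q < y'"
    then have "y' < p"
      using core[OF y'(1)] by auto
    then show False
      using g(3) x'(2) assms(5,6,7) \<open>y \<le> c\<close> by linarith
  qed
  ultimately have "x' < y" "x < y'"
    using assms(4-6) by linarith+
  then show "g \<in> {(x, y)}"
    using consecutive_unique[OF assms(3) g(2)] g(1) by auto
qed

lemma conserved_ivl_in_gap_right:
  assumes "a \<le> c" "conserved_ivl a c" "consecutive (frontiers a c) x y"
    and "x < u" "u < y" "u \<le> v" "conserved_ivl u v"
  shows "v < y"
proof (rule ccontr)
  assume "\<not> v < y"
  have x: "a \<le> x" and y: "y \<le> c" "conserved_ivl a y" "conserved_ivl y c"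
    using assms(3) by (auto simp: consecutive_def frontiers_def)
  have "conserved_ivl a u \<or> conserved_ivl u c"
  proof (cases "v = y")
    case True
    then show ?thesis
      using assms(5,7) y conserved_ivl_trans[of u y c] by auto
  next
    case False
    then show ?thesis
      using assms(4,5,7) x y \<open>\<not> v < y\<close> conserved_ivl_overlap[of a u y v] by auto
  qed
  then have "u \<in> frontiers a c"
    using assms(2,4,5) x y conserved_ivl_left_part[of a u c] conserved_ivl_right_part[of a u c]
    by (auto simp: frontiers_def)
  then show False
    using assms(3-5) by (auto simp: consecutive_def)
qed

lemma conserved_ivl_in_gap_left:
  assumes "a \<le> c" "conserved_ivl a c" "consecutive (frontiers a c) x y"
    and "x < v" "v < y" "u \<le> v" "conserved_ivl u v"
  shows "x < u"
proof (rule ccontr)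
  assume "\<not> x < u"
  have x: "a \<le> x" "conserved_ivl a x" "conserved_ivl x c" and y: "y \<le> c"
    using assms(3) by (auto simp: consecutive_def frontiers_def)
  have "conserved_ivl a v \<or> conserved_ivl v c"
  proof (cases "u = x")
    case True
    then show ?thesis
      using assms(4,7) x conserved_ivl_trans[of a x v] by auto
  next
    case False
    then show ?thesis
      using assms(4,5,7) x y \<open>\<not> x < u\<close> conserved_ivl_overlap[of u x v c] by auto
  qed
  then have "v \<in> frontiers a c"
    using assms(2,4,5) x y conserved_ivl_left_part[of a v c] conserved_ivl_right_part[of a v c]
    by (auto simp: frontiers_def)
  then show False
    using assms(3-5) by (auto simp: consecutive_def)
qed

lemma overlap_in_gap_extends:
  assumes "a \<le> c" "conserved_ivl a c" "consecutive (frontiers a c) x y"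
    and "x < p" "p \<le> q" "q < y" "conserved_ivl p q" "conserved n Ps L" "overlap {p..q} L"
  obtains L' where "conserved n Ps L'" "{p..q} \<subset> L'" "L' \<subseteq> {x<..<y}"
proof -
  obtain r s where rs: "r \<le> s" "L = {r..s}"
    using assms(8) by (rule conservedE)
  with assms(5,9) have "p < r \<and> r \<le> q \<and> q < s \<or> r < p \<and> p \<le> s \<and> s < q"
    by (simp add: overlap_def Min_Max_atLeastAtMost_int)
  then show ?thesis
  proof
    assume o: "p < r \<and> r \<le> q \<and> q < s"
    then have "s < y"
      using conserved_ivl_in_gap_right[OF assms(1-3), of r s] assms(4,6,8) rs by auto
    moreover have "conserved_ivl p s"
      using o assms(7,8) rs conserved_ivl_Un_overlap[of p r q s] by auto
    moreover have "{p..q} \<subset> {p..s}"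
      using o by (intro psubsetI) auto
    moreover have "{p..s} \<subseteq> {x<..<y}"
      using \<open>s < y\<close> assms(4) by auto
    ultimately show ?thesis
      using that by blast
  next
    assume o: "r < p \<and> p \<le> s \<and> s < q"
    then have "x < r"
      using conserved_ivl_in_gap_left[OF assms(1-3), of s r] assms(4,6,8) rs by auto
    moreover have "conserved_ivl r q"
      using o assms(7,8) rs conserved_ivl_Un_overlap[of r p s q] by auto
    moreover have "{p..q} \<subset> {r..q}"
      using o by (intro psubsetI) auto
    moreover have "{r..q} \<subseteq> {x<..<y}"
      using \<open>x < r\<close> assms(6) by auto
    ultimately show ?thesis
      using that by blast
  qed
qed

lemma strong_if_maximal_in_gap:
  assumes "a \<le> c" "conserved_ivl a c" "consecutive (frontiers a c) x y"
    and "conserved n Ps K" "K \<subseteq> {x<..<y}" "2 \<le> card K"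
    and maximal: "\<And>L. conserved n Ps L \<Longrightarrow> K \<subset> L \<Longrightarrow> L \<subseteq> {x<..<y} \<Longrightarrow> False"
  shows "strong n Ps K"
proof -
  obtain p q where pq: "p \<le> q" "K = {p..q}"
    using assms(4) by (rule conservedE)
  then have "x < p" "q < y"
    using assms(5) by auto
  have "\<not> overlap K L" if "conserved n Ps L" for L
    using overlap_in_gap_extends[OF assms(1-3) \<open>x < p\<close> pq(1) \<open>q < y\<close> _ that] assms(4) pq maximal
    by blast
  then show ?thesis
    using assms(4,6) by (simp add: strong_def)
qed

lemma largest_bnested_between:
  assumes "bnested n Ps b {p..q}" "x < p" "p \<le> q" "q < y"
  obtains K where "bnested n Ps b K" "{p..q} \<subseteq> K" "K \<subseteq> {x<..<y}"
    "\<And>L. bnested n Ps b L \<Longrightarrow> {p..q} \<subseteq> L \<Longrightarrow> L \<subseteq> {x<..<y} \<Longrightarrow> card L \<le> card K"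
proof -
  define admissible where
    "admissible K \<longleftrightarrow> bnested n Ps b K \<and> {p..q} \<subseteq> K \<and> K \<subseteq> {x<..<y}" for K
  have "admissible {p..q}"
    using assms by (auto simp: admissible_def)
  moreover have "\<forall>L. admissible L \<longrightarrow> card L < nat (y - x)"
  proof (intro allI impI)
    fix L assume "admissible L"
    then have "card L \<le> nat (y - x - 1)"
      using card_mono[of "{x<..<y}" L] by (simp add: admissible_def)
    then show "card L < nat (y - x)"
      using assms by linarith
  qed
  ultimately show ?thesis
    using Lattices_Big.ex_has_greatest_nat[of admissible "{p..q}" card "nat (y - x)"] that
    unfolding admissible_def by blast
qed

text \<open>
  A largest b-nested interval strictly between the frontiers \<open>x\<close> and \<open>y\<close> that contains the core
  is strong: an interval overlapping it would enlarge it, staying b-nested because the gap is short.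
\<close>

lemma good_gap_of_core:
  assumes "a \<le> c" "conserved_ivl a c" "consecutive (frontiers a c) x y"
    and "bnested n Ps b {p..q}" "x < p" "p \<le> q" "q < y"
    and "(p - x) + (y - q) \<le> int b" "int b < y - x"
  shows "good_gap n Ps b (x, y)"
proof -
  obtain K where K: "bnested n Ps b K" "{p..q} \<subseteq> K" "K \<subseteq> {x<..<y}"
    and greatest: "\<And>L. bnested n Ps b L \<Longrightarrow> {p..q} \<subseteq> L \<Longrightarrow> L \<subseteq> {x<..<y} \<Longrightarrow> card L \<le> card K"
    using largest_bnested_between[OF assms(4-7)] by blast
  have "card {p..q} \<le> card K"
    using K by (intro card_mono) (auto intro: finite_subset)
  then have card_K: "y - x + 1 - int b \<le> int (card K)"
    using assms(6,8) by simp
  have "strong n Ps K"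
  proof (rule strong_if_maximal_in_gap[OF assms(1-3)])
    show "conserved n Ps K" "K \<subseteq> {x<..<y}" "2 \<le> card K"
      using K bnested_conserved card_K assms(9) by auto
  next
    fix L assume L: "conserved n Ps L" "K \<subset> L" "L \<subseteq> {x<..<y}"
    have "card L \<le> nat (y - x - 1)"
      using card_mono[of "{x<..<y}" L] L(3) by simp
    then have "card L \<le> card K + b"
      using card_K by linarith
    then have "bnested n Ps b L"
      by (rule bnested.step[OF L(1) K(1) L(2)])
    then show False
      using greatest[of L] K(2) L psubset_card_mono[OF finite_subset[OF L(3)] L(2)] by auto
  qed
  moreover have "finite K" "K \<noteq> {}"
    using K assms(6) finite_subset by auto
  then have "x < Min K" "Max K < y"
    using K(3) by (auto simp: Min_gr_iff Max_less_iff)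
  ultimately show ?thesis
    using K(1) card_K by (auto simp: good_gap_def)
qed

lemma bgaps_if_core_off_frontiers:
  assumes "a \<le> p" "p \<le> q" "q \<le> c" "conserved_ivl a c" "bnested n Ps b {p..q}"
    and "(p - a) + (c - q) \<le> int b" "p \<notin> frontiers a c"
  shows "bgaps n Ps b {a..c} = {} \<or> (\<exists>g. bgaps n Ps b {a..c} = {g} \<and> good_gap n Ps b g)"
proof -
  have ac: "a \<le> c"
    using assms(1-3) by linarith
  obtain x y where xy: "consecutive (frontiers a c) x y" "x < p" "q < y"
    using assms(1-4) bnested_conserved[OF assms(5)] assms(7) by (rule frontier_gap_around_core)
  have "a \<le> x" "y \<le> c"
    using xy(1) by (auto simp: consecutive_def frontiers_def)
  have sub: "bgaps n Ps b {a..c} \<subseteq> {(x, y)}"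
    using bgaps_subset_gap_around_core[OF ac assms(4) xy(1,2) assms(2) xy(3) assms(6)] .
  show ?thesis
  proof (cases "int b < y - x")
    case True
    then have "(x, y) \<in> bgaps n Ps b {a..c}"
      using xy(1) bgaps_eq[OF ac assms(4)] by simp
    moreover have "good_gap n Ps b (x, y)"
      using True assms \<open>a \<le> x\<close> \<open>y \<le> c\<close>
      by (intro good_gap_of_core[OF ac assms(4) xy(1) assms(5) xy(2) assms(2) xy(3)]) auto
    ultimately show ?thesis
      using sub by blast
  next
    case False
    then have "(x, y) \<notin> bgaps n Ps b {a..c}"
      using bgaps_eq[OF ac assms(4)] by simp
    then show ?thesis
      using sub by blast
  qed
qed

lemma bgaps_if_bnested:
  assumes "bnested n Ps b J"
  shows "bgaps n Ps b J = {} \<or> (\<exists>g. bgaps n Ps b J = {g} \<and> good_gap n Ps b g)"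
  using assms
proof (induction rule: bnested.induct)
  case (single I)
  then obtain a where a: "I = {a}" "conserved_ivl a a"
    by (metis card_1_singletonE atLeastAtMost_singleton)
  then have "bgaps n Ps b {a..a} = {}"
    using bgaps_eq[of a a b] by (auto simp: consecutive_def frontiers_def)
  with a show ?case
    by simp
next
  case (step I I')
  obtain a c where ac: "a \<le> c" "I = {a..c}"
    using step.hyps(1) by (rule conservedE)
  obtain p q where pq: "p \<le> q" "I' = {p..q}"
    using bnested_conserved[OF step.hyps(2)] by (rule conservedE)
  have bounds: "a \<le> p" "q \<le> c"
    using step.hyps(3) ac pq by auto
  have slack: "(p - a) + (c - q) \<le> int b"
    using step.hyps(4) ac pq by simp
  have conserved: "conserved_ivl a c" "conserved_ivl p q"
    using step.hyps(1) bnested_conserved[OF step.hyps(2)] ac pq by auto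
  show ?case
  proof (cases "p \<in> frontiers a c")
    case True
    then have "bgaps n Ps b {a..c} = bgaps n Ps b {p..q}"
      using bounds slack conserved frontier_iff_frontier[of a p q c] pq(1)
      by (intro bgaps_eq_of_frontiers) auto
    then show ?thesis
      using step.IH ac pq by simp
  next
    case False
    then show ?thesis
      using bounds slack conserved bgaps_if_core_off_frontiers[of a p q c] step.hyps(2) ac pq by simp
  qed
qed

end

theorem theorem7:
  fixes n :: nat and Ps :: "int list list" and J :: "int set" and b :: nat
  assumes "n \<ge> 2"
    and "Ps \<noteq> []"
    and "Ps ! 0 = [1..int n]"
    and "\<forall>p\<in>set Ps. signed_perm n p \<and> hd p = 1 \<and> last p = int n"
    and "conserved n Ps J"
    and "b > 0"
  shows "bnested n Ps b J \<longleftrightarrow>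
           (bgaps n Ps b J = {} \<or> (\<exists>g. bgaps n Ps b J = {g} \<and> good_gap n Ps b g))"
proof -
  \<comment> \<open>Of the hypotheses on \<open>Ps\<close>, only distinctness of the absolute values is needed.\<close>
  interpret signed_perm_family n Ps
    using assms(4) by unfold_locales (auto simp: signed_perm_def)
  obtain a c where "a \<le> c" "J = {a..c}"
    using assms(5) by (rule conservedE)
  then show ?thesis
    using bgaps_if_bnested bnested_if_gaps assms(5) by blast
qed

end
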